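(* Let $(E,\varrho)$ be a Polish metric space and let $\alpha\in(0,1)$. Let $\mathcal{M}_+(E)$ be the set of nonnegative Borel measures $\mu$ on $E$ with $\mu(E)\le1$, endowed with the topology of weak convergence. For $t>0$ and $x\in E$ define $f_{t,x}:E\to[0,1]$ by $f_{t,x}(y)=1$ if $\varrho(x,y)\le 1/t$, $f_{t,x}(y)=-t\varrho(x,y)+2$ if $1/t\le\varrho(x,y)\le 2/t$, and $f_{t,x}(y)=0$ if $\varrho(x,y)\ge 2/t$; set $V_t(\mu,x)=\int f_{t,x}\,d\mu$ and, for $s\in\mathbb{N}$, $\beta^{\mathrm{H},\alpha}_\mu(x,s)=\sup_{t\ge s}t^\alpha V_t(\mu,x)$. For $r,s\in\mathbb{N}$ let $Z_\mu(r,s)=\{x\in E\mid \beta^{\mathrm{H},\alpha}_\mu(x,s)\le r\}$. Then for every $\delta>0$ and every $r,s\in\mathbb{N}$, the set \[ \mathcal{M}_{r,s}(\delta)=\{\mu\in\mathcal{M}_+(E)\mid \mu(Z_\mu(r,s))\ge\delta\} \] is a closed subset of $\mathcal{M}_+(E)$.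
   Context: Weak convergence: $\mu_n\to\mu$ iff $\int h\,d\mu_n\to\int h\,d\mu$ for every bounded continuous $h:E\to\mathbb{R}$. *)

theory Defs
  imports "HOL-Analysis.Analysis" "HOL-Probability.Probability"
begin

definition Mplus :: "('a::topological_space) measure set" where
  "Mplus = {\<mu>. sets \<mu> = sets borel \<and> emeasure \<mu> (space \<mu>) \<le> 1}"

definition weak_conv_topology :: "('a::topological_space) measure topology" where
  "weak_conv_topology = topology_generated_by
     {{\<mu> \<in> Mplus. integral\<^sup>L \<mu> h \<in> (U :: real set)} | h U.
        continuous_on UNIV h \<and> bounded (range h) \<and> open U}"

definition ftx :: "real \<Rightarrow> 'a::metric_space \<Rightarrow> 'a \<Rightarrow> real" where
  "ftx t x y = (if dist x y \<le> 1 / t then 1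
               else if dist x y \<le> 2 / t then - t * dist x y + 2 else 0)"

definition Vt :: "real \<Rightarrow> 'a::metric_space measure \<Rightarrow> 'a \<Rightarrow> real" where
  "Vt t \<mu> x = integral\<^sup>L \<mu> (ftx t x)"

definition betaH :: "real \<Rightarrow> 'a::metric_space measure \<Rightarrow> 'a \<Rightarrow> nat \<Rightarrow> ereal" where
  "betaH \<alpha> \<mu> x s = (SUP t\<in>{t. t > 0 \<and> t \<ge> real s}. ereal (t powr \<alpha> * Vt t \<mu> x))"

definition Zset :: "real \<Rightarrow> 'a::metric_space measure \<Rightarrow> nat \<Rightarrow> nat \<Rightarrow> 'a set" where
  "Zset \<alpha> \<mu> r s = {x. betaH \<alpha> \<mu> x s \<le> ereal (real r)}"

definition Mrs :: "real \<Rightarrow> nat \<Rightarrow> nat \<Rightarrow> real \<Rightarrow> 'a::metric_space measure set" where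
  "Mrs \<alpha> r s \<delta> = {\<mu> \<in> Mplus. emeasure \<mu> (Zset \<alpha> \<mu> r s) \<ge> ennreal \<delta>}"

end

theory Submission
  imports Defs
begin

(* A point x lies outside Z_mu(r,s) iff t^alpha V_t(mu,x) > r for some t >= s. As V_t(mu,x) is
   weakly continuous in mu and t-Lipschitz in x, this strict inequality persists for all mu weakly
   near mu0 and all y near x, uniformly for x in a compact set. If mu0(Z_mu0) < delta, inner
   regularity on the Polish space E gives a compact C outside Z_mu0 with mu0(E - C) < delta. For
   mu near mu0 the set Z_mu then misses an e-thickening N of C, and testing mu against a continuous
   cutoff that vanishes on C and equals 1 off N gives mu(Z_mu) <= mu(E - N) < delta. *)

lemma space_Mplus: "\<mu> \<in> Mplus \<Longrightarrow> space \<mu> = UNIV"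
  unfolding Mplus_def by (auto dest: sets_eq_imp_space_eq)

lemma sets_Mplus: "\<mu> \<in> Mplus \<Longrightarrow> sets \<mu> = sets borel"
  unfolding Mplus_def by auto

lemma finite_measure_Mplus: "\<mu> \<in> Mplus \<Longrightarrow> finite_measure \<mu>"
  unfolding Mplus_def by (intro finite_measureI) (auto simp: top_unique)

lemma measure_UNIV_le_1_Mplus:
  assumes "\<mu> \<in> Mplus"
  shows "measure \<mu> UNIV \<le> 1"
proof -
  have "ennreal (measure \<mu> UNIV) = emeasure \<mu> (space \<mu>)"
    using finite_measure.emeasure_eq_measure[OF finite_measure_Mplus[OF assms]] space_Mplus[OF assms]
    by simp
  also have "\<dots> \<le> 1" using assms by (simp add: Mplus_def)
  finally show ?thesis by (simp add: ennreal_le_1)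
qed

lemma integrable_Mplus:
  fixes h :: "'a::topological_space \<Rightarrow> real"
  assumes "\<mu> \<in> Mplus" "continuous_on UNIV h" "bounded (range h)"
  shows "integrable \<mu> h"
proof -
  interpret finite_measure \<mu> by (rule finite_measure_Mplus[OF assms(1)])
  obtain B where "\<And>x. norm (h x) \<le> B" using assms(3) by (auto simp: bounded_iff)
  moreover have "h \<in> borel_measurable \<mu>"
    using borel_measurable_continuous_onI[OF assms(2)] measurable_cong_sets[OF sets_Mplus[OF assms(1)] refl]
    by blast
  ultimately show ?thesis by (intro integrable_const_bound[where B = B]) auto
qed

lemma topspace_weak_conv_topology: "topspace weak_conv_topology = Mplus"
proof -
  have "\<mu> \<in> {\<nu> \<in> Mplus. integral\<^sup>L \<nu> (\<lambda>_. 0::real) \<in> UNIV}" if "\<mu> \<in> Mplus" for \<mu>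
    using that by simp
  then show ?thesis
    unfolding weak_conv_topology_def topology_generated_by_topspace by blast
qed

lemma openin_weak_conv_topology_integral:
  fixes h :: "'a::topological_space \<Rightarrow> real"
  assumes "continuous_on UNIV h" "bounded (range h)" "open U"
  shows "openin weak_conv_topology {\<mu> \<in> Mplus. integral\<^sup>L \<mu> h \<in> U}"
  unfolding weak_conv_topology_def openin_topology_generated_by_iff
  by (rule generate_topology_on.Basis) (use assms in blast)

lemma ftx_eq_clamp: "t > 0 \<Longrightarrow> ftx t x = (\<lambda>y. max 0 (min 1 (2 - t * dist x y)))"
  unfolding ftx_def by (auto simp: field_simps)

lemma continuous_on_ftx: "t > 0 \<Longrightarrow> continuous_on UNIV (ftx t x)"
  by (simp add: ftx_eq_clamp continuous_intros)

lemma bounded_range_ftx: "t > 0 \<Longrightarrow> bounded (range (ftx t x))"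
  unfolding bounded_iff by (intro exI[of _ 1]) (auto simp: ftx_eq_clamp)

lemma ftx_lipschitz: "t > 0 \<Longrightarrow> \<bar>ftx t x z - ftx t y z\<bar> \<le> t * dist x y"
proof -
  assume t: "t > 0"
  have clamp: "\<bar>max 0 (min 1 a) - max 0 (min 1 b)\<bar> \<le> \<bar>a - b\<bar>" for a b :: real
    by (simp add: max_def min_def abs_if)
  have "\<bar>ftx t x z - ftx t y z\<bar> \<le> \<bar>(2 - t * dist x z) - (2 - t * dist y z)\<bar>"
    unfolding ftx_eq_clamp[OF t] by (rule clamp)
  also have "\<dots> = t * \<bar>dist x z - dist y z\<bar>"
    using t by (simp add: abs_mult flip: right_diff_distrib)
  also have "\<dots> \<le> t * dist x y"
    using t abs_dist_diff_le[of x z y] by (simp add: dist_commute)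
  finally show ?thesis .
qed

lemma Vt_lipschitz:
  assumes "\<mu> \<in> Mplus" "t > 0"
  shows "\<bar>Vt t \<mu> x - Vt t \<mu> y\<bar> \<le> t * dist x y"
proof -
  interpret finite_measure \<mu> by (rule finite_measure_Mplus[OF assms(1)])
  have int: "integrable \<mu> (ftx t x)" "integrable \<mu> (ftx t y)"
    using integrable_Mplus[OF assms(1) continuous_on_ftx bounded_range_ftx] assms(2) by auto
  have "\<bar>Vt t \<mu> x - Vt t \<mu> y\<bar> = \<bar>integral\<^sup>L \<mu> (\<lambda>z. ftx t x z - ftx t y z)\<bar>"
    unfolding Vt_def using int by simp
  also have "\<dots> \<le> integral\<^sup>L \<mu> (\<lambda>z. \<bar>ftx t x z - ftx t y z\<bar>)"
    using integral_norm_bound[of \<mu> "\<lambda>z. ftx t x z - ftx t y z"] by simp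
  also have "\<dots> \<le> integral\<^sup>L \<mu> (\<lambda>z. t * dist x y)"
    using int ftx_lipschitz[OF assms(2)] by (intro integral_mono) auto
  also have "\<dots> = t * dist x y * measure \<mu> UNIV" using space_Mplus[OF assms(1)] by simp
  also have "\<dots> \<le> t * dist x y"
    using measure_UNIV_le_1_Mplus[OF assms(1)] assms(2) by (simp add: mult_left_le)
  finally show ?thesis .
qed

lemma notin_Zset_iff:
  "y \<notin> Zset \<alpha> \<mu> r s \<longleftrightarrow> (\<exists>t>0. real s \<le> t \<and> real r < t powr \<alpha> * Vt t \<mu> y)"
  unfolding Zset_def betaH_def by (auto simp: not_le less_SUP_iff)

lemma Zset_ball_disjoint_near:
  fixes \<mu>0 :: "'a::metric_space measure"
  assumes "\<mu>0 \<in> Mplus" "x \<notin> Zset \<alpha> \<mu>0 r s"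
  shows "\<exists>\<rho>>0. \<exists>W. openin weak_conv_topology W \<and> \<mu>0 \<in> W \<and>
           (\<forall>\<mu>\<in>W. ball x \<rho> \<inter> Zset \<alpha> \<mu> r s = {})"
proof -
  obtain t where t: "t > 0" "real s \<le> t" and gap: "real r < t powr \<alpha> * Vt t \<mu>0 x"
    using assms(2) notin_Zset_iff by blast
  define a where "a = t powr \<alpha>"
  define g where "g = (a * Vt t \<mu>0 x - real r) / 2"
  have a: "a > 0" and g: "g > 0" using t gap by (simp_all add: a_def g_def)
  define W where "W = {\<mu> \<in> Mplus. integral\<^sup>L \<mu> (ftx t x) \<in> ball (Vt t \<mu>0 x) (g / a)}"
  show ?thesis
  proof (intro exI[of _ "g / (a * t)"] exI[of _ W] conjI ballI)
    show "g / (a * t) > 0" using a g t by simp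
    show "openin weak_conv_topology W"
      unfolding W_def using t by (intro openin_weak_conv_topology_integral continuous_on_ftx bounded_range_ftx) auto
    show "\<mu>0 \<in> W" using assms(1) a g by (simp add: W_def Vt_def)
    fix \<mu> assume "\<mu> \<in> W"
    then have \<mu>: "\<mu> \<in> Mplus" and near: "\<bar>Vt t \<mu> x - Vt t \<mu>0 x\<bar> < g / a"
      by (auto simp: W_def Vt_def dist_real_def)
    have "y \<notin> Zset \<alpha> \<mu> r s" if "dist x y < g / (a * t)" for y
    proof -
      have "t * dist x y < g / a" using that a t by (simp add: field_simps)
      then have "Vt t \<mu>0 x - 2 * g / a < Vt t \<mu> y"
        using near Vt_lipschitz[OF \<mu> t(1), of x y] by linarith
      then have "a * (Vt t \<mu>0 x - 2 * g / a) < a * Vt t \<mu> y"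
        using a by (rule mult_strict_left_mono)
      moreover have "a * (Vt t \<mu>0 x - 2 * g / a) = real r"
        using a by (simp add: g_def field_simps)
      ultimately have "real r < t powr \<alpha> * Vt t \<mu> y"
        by (simp add: a_def)
      then show ?thesis using t notin_Zset_iff by blast
    qed
    then show "ball x (g / (a * t)) \<inter> Zset \<alpha> \<mu> r s = {}" by auto
  qed
qed

lemma closed_Zset:
  fixes \<mu> :: "'a::metric_space measure"
  assumes "\<mu> \<in> Mplus"
  shows "closed (Zset \<alpha> \<mu> r s)"
  unfolding closed_def open_contains_ball
  using Zset_ball_disjoint_near[OF assms] by blast

lemma compact_thickening_disjoint_near:
  fixes C :: "'a::metric_space set" and Z :: "'b \<Rightarrow> 'a set"
  assumes "compact C" "p \<in> topspace T"
    and local: "\<And>x. x \<in> C \<Longrightarrow>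
      \<exists>\<rho>>0. \<exists>W. openin T W \<and> p \<in> W \<and> (\<forall>q\<in>W. ball x \<rho> \<inter> Z q = {})"
  shows "\<exists>e>0. \<exists>W. openin T W \<and> p \<in> W \<and> (\<forall>q\<in>W. (\<Union>c\<in>C. ball c e) \<inter> Z q = {})"
proof -
  obtain \<rho> V where \<rho>: "\<And>x. x \<in> C \<Longrightarrow> \<rho> x > 0"
    and V: "\<And>x. x \<in> C \<Longrightarrow> openin T (V x) \<and> p \<in> V x \<and> (\<forall>q\<in>V x. ball x (\<rho> x) \<inter> Z q = {})"
    using local by metis
  obtain X where X: "X \<subseteq> C" "finite X" "C \<subseteq> (\<Union>x\<in>X. ball x (\<rho> x / 2))"
    using compactE_image[OF assms(1), of C "\<lambda>x. ball x (\<rho> x / 2)"] \<rho> by force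
  define e where "e = Min (insert 1 ((\<lambda>x. \<rho> x / 2) ` X))" \<comment> \<open>the 1 covers \<open>X = {}\<close>\<close>
  have e: "e > 0" using X \<rho> by (auto simp: e_def)
  have e_le: "e \<le> \<rho> x / 2" if "x \<in> X" for x
    unfolding e_def using X that by (intro Min_le) auto
  show ?thesis
  proof (intro exI[of _ e] exI[of _ "(\<Inter>x\<in>X. V x) \<inter> topspace T"] conjI ballI)
    show "openin T ((\<Inter>x\<in>X. V x) \<inter> topspace T)" using X V by (intro openin_INT) auto
    show "p \<in> (\<Inter>x\<in>X. V x) \<inter> topspace T" using X V assms(2) by auto
    fix q assume q: "q \<in> (\<Inter>x\<in>X. V x) \<inter> topspace T"
    have "y \<notin> Z q" if "c \<in> C" "dist c y < e" for c y
    proof -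
      obtain x where x: "x \<in> X" "dist x c < \<rho> x / 2" using X \<open>c \<in> C\<close> by auto
      have "dist x y < \<rho> x" using dist_triangle[of x y c] x that e_le[OF x(1)] by linarith
      moreover have "ball x (\<rho> x) \<inter> Z q = {}" using V[of x] q x X by auto
      ultimately show ?thesis by auto
    qed
    then show "(\<Union>c\<in>C. ball c e) \<inter> Z q = {}" by auto
  qed (use e in auto)
qed

lemma continuous_cutoff_thickening:
  fixes C :: "'a::metric_space set"
  assumes "e > 0"
  obtains \<phi> :: "'a \<Rightarrow> real"
  where "continuous_on UNIV \<phi>" "\<And>y. 0 \<le> \<phi> y \<and> \<phi> y \<le> 1"
    "\<And>y. y \<in> C \<Longrightarrow> \<phi> y = 0" "\<And>y. y \<notin> (\<Union>c\<in>C. ball c e) \<Longrightarrow> \<phi> y = 1"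
proof (cases "C = {}")
  case True
  then show ?thesis by (intro that[of "\<lambda>_. 1"]) auto
next
  case False
  have far: "e \<le> infdist y C" if "y \<notin> (\<Union>c\<in>C. ball c e)" for y
    unfolding infdist_notempty[OF False]
    by (rule cINF_greatest) (use that False in \<open>auto simp: dist_commute not_less\<close>)
  show ?thesis
  proof (intro that[of "\<lambda>y. min 1 (infdist y C / e)"])
    show "continuous_on UNIV (\<lambda>y. min 1 (infdist y C / e))"
      using assms by (intro continuous_intros) auto
  qed (use assms far in \<open>auto simp: infdist_nonneg\<close>)
qed

lemma measure_outside_thickening_near:
  fixes \<mu>0 :: "'a::metric_space measure"
  assumes "\<mu>0 \<in> Mplus" "closed C" "e > 0" "\<eta> > 0"
  shows "\<exists>W. openin weak_conv_topology W \<and> \<mu>0 \<in> W \<and>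
           (\<forall>\<mu>\<in>W. measure \<mu> (- (\<Union>c\<in>C. ball c e)) < measure \<mu>0 (- C) + \<eta>)"
proof -
  let ?N = "\<Union>c\<in>C. ball c e"
  obtain \<phi> :: "'a \<Rightarrow> real" where \<phi>: "continuous_on UNIV \<phi>" "\<And>y. 0 \<le> \<phi> y \<and> \<phi> y \<le> 1"
    "\<And>y. y \<in> C \<Longrightarrow> \<phi> y = 0" "\<And>y. y \<notin> ?N \<Longrightarrow> \<phi> y = 1"
    using continuous_cutoff_thickening[OF assms(3)] by blast
  have bounded: "bounded (range \<phi>)"
    unfolding bounded_iff using \<phi>(2) by (intro exI[of _ 1]) force
  have below: "measure \<mu> (- ?N) \<le> integral\<^sup>L \<mu> \<phi>" if "\<mu> \<in> Mplus" for \<mu>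
  proof -
    have "measure \<mu> (- ?N) = integral\<^sup>L \<mu> (indicator (- ?N))" using space_Mplus[OF that] by simp
    also have "\<dots> \<le> integral\<^sup>L \<mu> \<phi>"
      by (rule integral_mono'[OF integrable_Mplus[OF that \<phi>(1) bounded]])
         (use \<phi> in \<open>auto simp: indicator_def\<close>)
    finally show ?thesis .
  qed
  have above: "integral\<^sup>L \<mu>0 \<phi> \<le> measure \<mu>0 (- C)"
  proof -
    interpret finite_measure \<mu>0 by (rule finite_measure_Mplus[OF assms(1)])
    have "- C \<in> sets \<mu>0" using assms(2) sets_Mplus[OF assms(1)] by auto
    then have "integrable \<mu>0 (indicator (- C) :: 'a \<Rightarrow> real)"
      by (simp add: integrable_indicator_iff less_top[symmetric] space_Mplus[OF assms(1)])
    then have "integral\<^sup>L \<mu>0 \<phi> \<le> integral\<^sup>L \<mu>0 (indicator (- C))"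
      by (rule integral_mono') (use \<phi> in \<open>auto simp: indicator_def\<close>)
    then show ?thesis using space_Mplus[OF assms(1)] by simp
  qed
  define W where "W = {\<mu> \<in> Mplus. integral\<^sup>L \<mu> \<phi> \<in> {..< integral\<^sup>L \<mu>0 \<phi> + \<eta>}}"
  have "openin weak_conv_topology W"
    unfolding W_def using \<phi>(1) bounded by (rule openin_weak_conv_topology_integral) simp
  moreover have "\<mu>0 \<in> W" using assms(1,4) by (simp add: W_def)
  moreover have "measure \<mu> (- ?N) < measure \<mu>0 (- C) + \<eta>" if "\<mu> \<in> W" for \<mu>
    using that below above by (fastforce simp: W_def)
  ultimately show ?thesis by blast
qed

lemma compact_subset_measure_diff_less:
  fixes M :: "'a::polish_space measure"
  assumes "sets M = sets borel" "finite_measure M" "B \<in> sets borel" "\<eta> > 0"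
  obtains K where "compact K" "K \<subseteq> B" "measure M (B - K) < \<eta>"
proof (cases "measure M B < \<eta>")
  case True
  then show ?thesis by (intro that[of "{}"]) auto
next
  case False
  interpret finite_measure M by (rule assms(2))
  have "ennreal (measure M B - \<eta>) < emeasure M B"
    using False assms(4) by (simp add: emeasure_eq_measure ennreal_less_iff)
  also have "\<dots> = (SUP K \<in> {K. K \<subseteq> B \<and> compact K}. emeasure M K)"
    by (rule inner_regular[OF assms(1) _ assms(3)]) simp
  finally obtain K where K: "K \<subseteq> B" "compact K" "ennreal (measure M B - \<eta>) < emeasure M K"
    by (auto simp: less_SUP_iff)
  then have "measure M B - \<eta> < measure M K"
    using False by (simp add: emeasure_eq_measure ennreal_less_iff)
  moreover have "measure M (B - K) = measure M B - measure M K"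
    using K assms(1,3) by (intro finite_measure_Diff) (auto intro: borel_closed compact_imp_closed)
  ultimately show ?thesis using that K by auto
qed

lemma compact_disjoint_measure_Compl_less:
  fixes M :: "'a::polish_space measure"
  assumes "sets M = sets borel" "finite_measure M" "Z \<in> sets borel" "measure M Z < \<delta>"
  obtains C where "compact C" "C \<inter> Z = {}" "measure M (- C) < \<delta>"
proof -
  interpret finite_measure M by (rule assms(2))
  obtain C where C: "compact C" "C \<subseteq> - Z" "measure M (- Z - C) < \<delta> - measure M Z"
    by (rule compact_subset_measure_diff_less[OF assms(1,2) borel_comp[OF assms(3)],
          where \<eta> = "\<delta> - measure M Z"]) (use assms(4) in auto)
  have "measure M (- C) = measure M (Z \<union> (- Z - C))"
    using C(2) by (intro arg_cong[where f = "measure M"]) auto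
  also have "\<dots> = measure M Z + measure M (- Z - C)"
    using assms(1,3) borel_compact[OF C(1)] by (intro finite_measure_Union) auto
  finally have "measure M (- C) < \<delta>" using C(3) by linarith
  moreover have "C \<inter> Z = {}" using C(2) by auto
  ultimately show ?thesis using that C(1) by blast
qed

lemma Zset_measure_less_near:
  fixes \<mu>0 :: "'a::metric_space measure"
  assumes "\<mu>0 \<in> Mplus" "compact C" "C \<inter> Zset \<alpha> \<mu>0 r s = {}" "measure \<mu>0 (- C) < \<delta>"
  shows "\<exists>W. openin weak_conv_topology W \<and> \<mu>0 \<in> W \<and>
           (\<forall>\<mu>\<in>W. emeasure \<mu> (Zset \<alpha> \<mu> r s) < ennreal \<delta>)"
proof -
  have "\<exists>e>0. \<exists>W. openin weak_conv_topology W \<and> \<mu>0 \<in> W \<and>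
          (\<forall>\<mu>\<in>W. (\<Union>c\<in>C. ball c e) \<inter> Zset \<alpha> \<mu> r s = {})"
  proof (rule compact_thickening_disjoint_near[OF assms(2)])
    show "\<mu>0 \<in> topspace weak_conv_topology" using assms(1) by (simp add: topspace_weak_conv_topology)
    fix x assume "x \<in> C"
    then have "x \<notin> Zset \<alpha> \<mu>0 r s" using assms(3) by auto
    then show "\<exists>\<rho>>0. \<exists>W. openin weak_conv_topology W \<and> \<mu>0 \<in> W \<and>
                 (\<forall>\<mu>\<in>W. ball x \<rho> \<inter> Zset \<alpha> \<mu> r s = {})"
      by (rule Zset_ball_disjoint_near[OF assms(1)])
  qed
  then obtain e W1 where e: "e > 0" and W1: "openin weak_conv_topology W1" "\<mu>0 \<in> W1"
    and disjoint: "\<And>\<mu>. \<mu> \<in> W1 \<Longrightarrow> (\<Union>c\<in>C. ball c e) \<inter> Zset \<alpha> \<mu> r s = {}"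
    by auto
  obtain W2 where W2: "openin weak_conv_topology W2" "\<mu>0 \<in> W2"
    and outside: "\<And>\<mu>. \<mu> \<in> W2 \<Longrightarrow> measure \<mu> (- (\<Union>c\<in>C. ball c e)) < \<delta>"
    using measure_outside_thickening_near[OF assms(1) compact_imp_closed[OF assms(2)] e,
        of "\<delta> - measure \<mu>0 (- C)"] assms(4) by auto
  have "emeasure \<mu> (Zset \<alpha> \<mu> r s) < ennreal \<delta>" if \<mu>: "\<mu> \<in> W1 \<inter> W2" for \<mu>
  proof -
    have "\<mu> \<in> Mplus" using \<mu> openin_subset[OF W1(1)] topspace_weak_conv_topology by auto
    then interpret finite_measure \<mu> by (rule finite_measure_Mplus)
    have "emeasure \<mu> (Zset \<alpha> \<mu> r s) \<le> emeasure \<mu> (- (\<Union>c\<in>C. ball c e))"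
      using disjoint \<mu> sets_Mplus[OF \<open>\<mu> \<in> Mplus\<close>]
      by (intro emeasure_mono) (auto intro: borel_closed closed_Compl)
    also have "\<dots> < ennreal \<delta>"
      using outside \<mu> by (simp add: emeasure_eq_measure ennreal_less_iff)
    finally show ?thesis .
  qed
  then show ?thesis using W1 W2 by (intro exI[of _ "W1 \<inter> W2"]) auto
qed

theorem lemma3p2:
  fixes \<alpha> \<delta> :: real and r s :: nat
  assumes "0 < \<alpha>" "\<alpha> < 1" "\<delta> > 0" "r \<ge> 1" "s \<ge> 1"
  shows "closedin (weak_conv_topology :: ('a::polish_space) measure topology) (Mrs \<alpha> r s \<delta>)"
proof -
  have "\<exists>W. openin weak_conv_topology W \<and> \<mu>0 \<in> W \<and> W \<subseteq> Mplus - Mrs \<alpha> r s \<delta>"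
    if "\<mu>0 \<in> Mplus - Mrs \<alpha> r s \<delta>" for \<mu>0 :: "'a measure"
  proof -
    have \<mu>0: "\<mu>0 \<in> Mplus" using that by simp
    have "measure \<mu>0 (Zset \<alpha> \<mu>0 r s) < \<delta>"
      using that finite_measure.emeasure_eq_measure[OF finite_measure_Mplus[OF \<mu>0]]
      by (auto simp: Mrs_def not_le ennreal_less_iff)
    then obtain C where C: "compact C" "C \<inter> Zset \<alpha> \<mu>0 r s = {}" "measure \<mu>0 (- C) < \<delta>"
      using compact_disjoint_measure_Compl_less[OF sets_Mplus[OF \<mu>0] finite_measure_Mplus[OF \<mu>0]
          borel_closed[OF closed_Zset[OF \<mu>0]]] by metis
    obtain W where W: "openin weak_conv_topology W" "\<mu>0 \<in> W"
      and small: "\<And>\<mu>. \<mu> \<in> W \<Longrightarrow> emeasure \<mu> (Zset \<alpha> \<mu> r s) < ennreal \<delta>"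
      using Zset_measure_less_near[OF \<mu>0 C] by metis
    have "W \<subseteq> Mplus" using openin_subset[OF W(1)] by (simp add: topspace_weak_conv_topology)
    then have "W \<subseteq> Mplus - Mrs \<alpha> r s \<delta>" by (auto simp: Mrs_def not_le dest: small)
    then show ?thesis using W by blast
  qed
  then have "openin weak_conv_topology (Mplus - Mrs \<alpha> r s \<delta> :: 'a measure set)"
    by (subst openin_subopen) blast
  then show ?thesis
    unfolding closedin_def topspace_weak_conv_topology by (auto simp: Mrs_def)
qed

end
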